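(* Let $\mu_1,\mu_2>0$ and $0\le p<1$ with $\frac1{\mu_1}+\frac p{\mu_2}=1$, let $b\ge1$, $N\ge2$, $0<\alpha<0.5$, $\lambda=1-N^{-\alpha}$, $w_u=\max\{(1-p)\mu_1,\mu_2\}$, $w_l=\min\{(1-p)\mu_1,\mu_2\}$, $k=\left(1+\frac{w_u b}{w_l}\right)\left(\frac{1+\mu_1+\mu_2}{w_l}+2\mu_1\right)$. Let $$\mathcal S_{ssc_1}=\left\{s:\ s_1\ge \lambda+\left(\tfrac{1+\mu_1+\mu_2}{w_l}-\mu_1\right)\tfrac{\log N}{\sqrt N},\ s_{1,1}\ge \tfrac{\lambda}{\mu_1}-\tfrac{\log N}{\sqrt N},\ s_{1,2}\ge \tfrac{p\lambda}{\mu_2}-\tfrac{\mu_1\log N}{\sqrt N}\right\},$$ where for $s\in\mathbb R^{b\times2}$, $s_i=s_{i,1}+s_{i,2}$. Then for every $s\in\mathcal S_{ssc_1}$, $$\left(\lambda+\frac{\log N}{\sqrt N}-(1-p)\mu_1s_{1,1}-\mu_2s_{1,2}\right)\mathbb I_{\left\{\sum_{i=1}^b s_i>\lambda+\frac{k\log N}{\sqrt N}+\frac1N\right\}}\le 0.$$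
   Context: Here $s=(s_{i,m})_{1\le i\le b,\,m\in\{1,2\}}$ is a system state: $s_{i,m}$ is the fraction of servers (out of $N$) with at least $i$ jobs whose job in service is in phase $m$ of a Coxian-2 service distribution, so $s$ belongs to $\mathcal S^{(N)}=\{s: 1\ge s_{1,m}\ge\cdots\ge s_{b,m}\ge0,\ s_{1,1}+s_{1,2}\le1,\ Ns_{i,m}\in\mathbb N\}$. $\mathbb I$ denotes an indicator. *)

theory Defs
  imports Complex_Main
begin

text \<open>A system state is s :: nat => nat => real, where s i m is the fraction of
servers with at least i jobs whose job in service is in phase m (1 <= i <= b, m in {1,2}).\<close>

definition state_space :: "nat \<Rightarrow> nat \<Rightarrow> (nat \<Rightarrow> nat \<Rightarrow> real) set" where
  "state_space N b = {s.
     (\<forall>m\<in>{1,2}. s 1 m \<le> 1 \<and> (\<forall>i\<in>{1..<b}. s (Suc i) m \<le> s i m) \<and> 0 \<le> s b m)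
   \<and> s 1 1 + s 1 2 \<le> 1
   \<and> (\<forall>i\<in>{1..b}. \<forall>m\<in>{1,2}. \<exists>n::nat. real N * s i m = real n)}"

definition tot :: "(nat \<Rightarrow> nat \<Rightarrow> real) \<Rightarrow> nat \<Rightarrow> real" where
  "tot s i = s i 1 + s i 2"

definition S_ssc1 :: "nat \<Rightarrow> nat \<Rightarrow> real \<Rightarrow> real \<Rightarrow> real \<Rightarrow> real \<Rightarrow> real \<Rightarrow> (nat \<Rightarrow> nat \<Rightarrow> real) set" where
  "S_ssc1 N b lam \<mu>1 \<mu>2 p wl = {s \<in> state_space N b.
     tot s 1 \<ge> lam + ((1 + \<mu>1 + \<mu>2) / wl - \<mu>1) * ln (real N) / sqrt (real N)
   \<and> s 1 1 \<ge> lam / \<mu>1 - ln (real N) / sqrt (real N)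
   \<and> s 1 2 \<ge> p * lam / \<mu>2 - \<mu>1 * ln (real N) / sqrt (real N)}"

end

theory Submission
  imports Defs
begin

text \<open>Write \<open>a = s\<^sub>1\<^sub>,\<^sub>1\<close>, \<open>c = s\<^sub>1\<^sub>,\<^sub>2\<close>, \<open>L = log N / \<surd>N\<close> and let \<open>0 < w \<le> w\<^sub>l\<close>. Split
  \<open>(1-p)\<mu>\<^sub>1a + \<mu>\<^sub>2c = w(a+c) + ((1-p)\<mu>\<^sub>1 - w)a + (\<mu>\<^sub>2 - w)c\<close>; all three coefficients are
  nonnegative, so the three lower bounds defining \<open>S\<^sub>s\<^sub>s\<^sub>c\<^sub>1\<close> may be inserted. By
  \<open>1/\<mu>\<^sub>1 + p/\<mu>\<^sub>2 = 1\<close> the \<open>\<lambda>\<close>-terms add up to exactly \<open>\<lambda>\<close> and the \<open>L\<close>-terms to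
  \<open>(1 + w)L\<close>, so the drift factor \<open>\<lambda> + L - (1-p)\<mu>\<^sub>1a - \<mu>\<^sub>2c\<close> is at most \<open>-wL \<le> 0\<close>
  on all of \<open>S\<^sub>s\<^sub>s\<^sub>c\<^sub>1\<close>.\<close>

lemma service_rate_identity:
  fixes \<mu>1 \<mu>2 p :: real
  assumes "\<mu>1 > 0" and "\<mu>2 > 0" and "1 / \<mu>1 + p / \<mu>2 = 1"
  shows "\<mu>2 + p * \<mu>1 = \<mu>1 * \<mu>2"
  using assms by (simp add: field_simps)

lemma drift_le_neg_weighted_slack:
  fixes \<mu>1 \<mu>2 p w lam L a c :: real
  assumes "\<mu>1 > 0" and "\<mu>2 > 0" and "1 / \<mu>1 + p / \<mu>2 = 1"
    and "0 < w" and "w \<le> (1 - p) * \<mu>1" and "w \<le> \<mu>2"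
    and sum_bound: "a + c \<ge> lam + ((1 + \<mu>1 + \<mu>2) / w - \<mu>1) * L"
    and a_bound: "a \<ge> lam / \<mu>1 - L"
    and c_bound: "c \<ge> p * lam / \<mu>2 - \<mu>1 * L"
  shows "lam + L - (1 - p) * \<mu>1 * a - \<mu>2 * c \<le> - (w * L)"
proof -
  have "w * (a + c) \<ge> w * (lam + ((1 + \<mu>1 + \<mu>2) / w - \<mu>1) * L)"
    using sum_bound \<open>0 < w\<close> by (simp add: mult_left_mono)
  also have "w * (lam + ((1 + \<mu>1 + \<mu>2) / w - \<mu>1) * L)
      = w * lam + (1 + \<mu>1 + \<mu>2 - w * \<mu>1) * L"
    using \<open>0 < w\<close> by (simp add: field_simps)
  finally have sum_part: "w * (a + c) \<ge> w * lam + (1 + \<mu>1 + \<mu>2 - w * \<mu>1) * L" .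
  have a_part: "((1 - p) * \<mu>1 - w) * a \<ge> ((1 - p) * \<mu>1 - w) * (lam / \<mu>1 - L)"
    using a_bound assms(5) by (simp add: mult_left_mono)
  have c_part: "(\<mu>2 - w) * c \<ge> (\<mu>2 - w) * (p * lam / \<mu>2 - \<mu>1 * L)"
    using c_bound assms(6) by (simp add: mult_left_mono)
  have "w * lam + (1 + \<mu>1 + \<mu>2 - w * \<mu>1) * L
      + ((1 - p) * \<mu>1 - w) * (lam / \<mu>1 - L) + (\<mu>2 - w) * (p * lam / \<mu>2 - \<mu>1 * L)
      = lam + (1 + w) * L + w * lam * (1 - 1 / \<mu>1 - p / \<mu>2)
        + (\<mu>2 + p * \<mu>1 - \<mu>1 * \<mu>2) * L" (is "?bounds = _")
    using assms(1,2) by (simp add: field_simps)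
  also have "\<dots> = lam + (1 + w) * L"
    using assms(3) service_rate_identity[OF assms(1-3)] by simp
  finally have collect: "?bounds = lam + (1 + w) * L" .
  have "(1 - p) * \<mu>1 * a + \<mu>2 * c = w * (a + c) + ((1 - p) * \<mu>1 - w) * a + (\<mu>2 - w) * c"
    by (simp add: algebra_simps)
  also have "\<dots> \<ge> lam + (1 + w) * L"
    using sum_part a_part c_part collect by linarith
  finally show ?thesis by (simp add: algebra_simps)
qed

lemma drift_nonpos_on_S_ssc1:
  fixes \<mu>1 \<mu>2 p lam :: real and b N :: nat and s :: "nat \<Rightarrow> nat \<Rightarrow> real"
  assumes "\<mu>1 > 0" and "\<mu>2 > 0" and "p < 1" and "1 / \<mu>1 + p / \<mu>2 = 1"
    and "s \<in> S_ssc1 N b lam \<mu>1 \<mu>2 p (min ((1 - p) * \<mu>1) \<mu>2)"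
  shows "lam + ln (real N) / sqrt (real N) - (1 - p) * \<mu>1 * s 1 1 - \<mu>2 * s 1 2 \<le> 0"
proof -
  let ?w = "min ((1 - p) * \<mu>1) \<mu>2"
  have "?w > 0" using assms(1-3) by simp
  have "ln (real N) / sqrt (real N) \<ge> 0"
    by (cases N) simp_all
  with \<open>?w > 0\<close> have "?w * (ln (real N) / sqrt (real N)) \<ge> 0"
    by (intro mult_nonneg_nonneg) simp_all
  moreover have "lam + ln (real N) / sqrt (real N) - (1 - p) * \<mu>1 * s 1 1 - \<mu>2 * s 1 2
      \<le> - (?w * (ln (real N) / sqrt (real N)))"
    using assms(5) \<open>?w > 0\<close>
    by (intro drift_le_neg_weighted_slack[OF assms(1,2,4)])
       (auto simp: S_ssc1_def tot_def)
  ultimately show ?thesis by linarith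
qed

theorem lemma4:
  fixes \<mu>1 \<mu>2 p \<alpha> lam wu wl k :: real and b N :: nat and s :: "nat \<Rightarrow> nat \<Rightarrow> real"
  assumes "\<mu>1 > 0" and "\<mu>2 > 0" and "0 \<le> p" and "p < 1"
    and "1 / \<mu>1 + p / \<mu>2 = 1"
    and "b \<ge> 1" and "N \<ge> 2" and "0 < \<alpha>" and "\<alpha> < 0.5"
    and "lam = 1 - real N powr (-\<alpha>)"
    and "wu = max ((1 - p) * \<mu>1) \<mu>2" and "wl = min ((1 - p) * \<mu>1) \<mu>2"
    and "k = (1 + wu * real b / wl) * ((1 + \<mu>1 + \<mu>2) / wl + 2 * \<mu>1)"
    and "s \<in> S_ssc1 N b lam \<mu>1 \<mu>2 p wl"
  shows "(lam + ln (real N) / sqrt (real N) - (1 - p) * \<mu>1 * s 1 1 - \<mu>2 * s 1 2)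
           * (if (\<Sum>i=1..b. tot s i) > lam + k * ln (real N) / sqrt (real N) + 1 / real N
              then 1 else 0) \<le> 0"
  using drift_nonpos_on_S_ssc1[OF assms(1,2,4,5)] assms(12,14) by simp

end
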